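(* Let $n\geq 2$ and $0\leq s<\pi/4$. Then for the metric $g_{\pi/4,0}$, $$K_s(t)=\begin{cases}1,& 0\le|t|<\ell(s),\\ -1+4\sin^2(s)\,F(|t|,s)^{-4},& |t|>\ell(s),\end{cases}$$ where $\ell(s)=\arccos\big(\cos(\pi/4)/\cos(s)\big)$ and $F(t,s)=\cosh(t-\ell(s))+\sqrt{\cos(2s)}\,\sinh(t-\ell(s))$.
   Context: Fix $\varphi\in C^\infty(\mathbb{R})$ with $0\le\varphi\le1$, $\varphi(x)=0$ for $x\le0$, $\varphi(x)=1$ for $x\ge1$, and let $H$ be the Heaviside function ($H(x)=1$ for $x>0$, $H(x)=0$ for $x\le0$). For $r>0$, $\epsilon\ge0$ with $r+\epsilon<\pi/2$ and $\rho\ge0$ set $K^\parallel_{r,\epsilon}(\rho)=1-2\varphi((\rho-r)/\epsilon)$ if $\epsilon>0$ and $K^\parallel_{r,0}(\rho)=1-2H(\rho-r)$. Let $\mathcal{A}_{r,\epsilon}$ solve $\mathcal{A}''+K^\parallel_{r,\epsilon}\mathcal{A}=0$, $\mathcal{A}(0)=0$, $\mathcal{A}'(0)=1$ (for $\epsilon=0$: the unique $C^1$ function with these initial values solving the equation on $\rho\ne r$). Let $g_{r,\epsilon}=d\rho^2+\mathcal{A}_{r,\epsilon}(\rho)^2\mathring g$ on $\mathbb{R}^{n+1}$ in polar coordinates ($\mathring g$ the round metric on $S^n$). Every unit speed geodesic $\gamma$ lies in a 2-plane $\Sigma_\gamma$ through the origin. For $\mu=(s,r,\epsilon)$ with $s\ge0$,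 $\rho_\mu(t)$ denotes the radial coordinate $\rho(\gamma(t))$ of a unit speed geodesic whose minimal distance to the origin is $s$, attained at $t=0$: for $s>0$ it is the solution of $\rho''=\frac{\mathcal{A}_{r,\epsilon}'(\rho)}{\mathcal{A}_{r,\epsilon}(\rho)}(1-(\rho')^2)$, $\rho(0)=s$, $\rho'(0)=0$, and $\rho_{0,r,\epsilon}(t)=t$. Set $K^\perp_{r,\epsilon}(\rho)=\mathcal{A}_{r,\epsilon}(\rho)^{-2}\big(1-\mathcal{A}_{r,\epsilon}'(\rho)^2\big)$ and $K_{s,r,\epsilon}(t)=\rho_\mu'(t)^2K^\parallel_{r,\epsilon}(\rho_\mu(t))+(1-\rho_\mu'(t)^2)K^\perp_{r,\epsilon}(\rho_\mu(t))$; for $n\ge2$ this is the sectional curvature of the 2-plane spanned by $\gamma'(t)$ and a vector orthogonal to $\Sigma_\gamma$. Write $K_s=K_{s,\pi/4,0}$. *)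

theory Defs
  imports "HOL-Analysis.Analysis"
begin

definition heaviside :: "real \<Rightarrow> real" where
  "heaviside x = (if x > 0 then 1 else 0)"

text \<open>Radial curvature K^par_{r,0}(rho) = 1 - 2 H(rho - r) (the case epsilon = 0).\<close>
definition Kpar :: "real \<Rightarrow> real \<Rightarrow> real" where
  "Kpar r \<rho> = 1 - 2 * heaviside (\<rho> - r)"

definition is_warp :: "real \<Rightarrow> (real \<Rightarrow> real) \<Rightarrow> bool" where
  "is_warp r f \<longleftrightarrow> (\<exists>f'. continuous_on UNIV f' \<and>
      (\<forall>x. (f has_real_derivative f' x) (at x)) \<and>
      (\<forall>x. x \<noteq> r \<longrightarrow> (f' has_real_derivative (- Kpar r x * f x)) (at x)) \<and>
      f 0 = 0 \<and> f' 0 = 1)"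

definition warp :: "real \<Rightarrow> real \<Rightarrow> real" where
  "warp r = (THE f. is_warp r f)"

definition Kperp :: "real \<Rightarrow> real \<Rightarrow> real" where
  "Kperp r \<rho> = (1 - (deriv (warp r) \<rho>)\<^sup>2) / (warp r \<rho>)\<^sup>2"

text \<open>Radial coordinate of a unit speed geodesic with minimal distance s > 0 to the origin,
  attained at t = 0: solution of rho'' = (A'(rho)/A(rho)) (1 - rho'^2), rho(0)=s, rho'(0)=0.\<close>
definition is_geod_radius :: "real \<Rightarrow> real \<Rightarrow> (real \<Rightarrow> real) \<Rightarrow> bool" where
  "is_geod_radius r s p \<longleftrightarrow> (\<exists>p'.
      (\<forall>t. (p has_real_derivative p' t) (at t)) \<and>
      (\<forall>t. (p' has_real_derivative
              (deriv (warp r) (p t) / warp r (p t) * (1 - (p' t)\<^sup>2))) (at t)) \<and>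
      p 0 = s \<and> p' 0 = 0)"

definition geod_radius :: "real \<Rightarrow> real \<Rightarrow> real \<Rightarrow> real" where
  "geod_radius r s = (THE p. is_geod_radius r s p)"

text \<open>K_{s,r,0}(t). For s = 0 the geodesic passes through the origin, its radial coordinate
  is |t| and rho'^2 = 1, so K = K^par(|t|).\<close>
definition Kcurv :: "real \<Rightarrow> real \<Rightarrow> real \<Rightarrow> real" where
  "Kcurv s r t =
     (if s = 0 then Kpar r \<bar>t\<bar>
      else (let \<rho> = geod_radius r s t; d = deriv (geod_radius r s) t in
            d\<^sup>2 * Kpar r \<rho> + (1 - d\<^sup>2) * Kperp r \<rho>))"

definition ell :: "real \<Rightarrow> real" where
  "ell s = arccos (cos (pi/4) / cos s)"

definition Ffun :: "real \<Rightarrow> real \<Rightarrow> real" where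
  "Ffun t s = cosh (t - ell s) + sqrt (cos (2 * s)) * sinh (t - ell s)"

end

theory Submission
  imports Defs
begin

text \<open>For \<open>r = \<pi>/4\<close> the warping function is \<open>\<A>(\<rho>) = sin \<rho>\<close> for \<open>\<rho> \<le> \<pi>/4\<close> and
  \<open>\<A>(\<rho>) = (\<surd>2/2) exp (\<rho> - \<pi>/4)\<close> beyond, so the metric is round inside the ball of radius
  \<open>\<pi>/4\<close>, while outside it the radial curvature is \<open>-1\<close> and the tangential one is
  \<open>2 exp (-2(\<rho> - \<pi>/4)) - 1\<close>. The radial coordinate of the geodesic is explicit: inside the
  ball \<open>cos \<rho> = cos s cos t\<close>, which reaches \<open>\<pi>/4\<close> at \<open>|t| = ell s\<close>; outside,
  \<open>\<rho>'' = 1 - \<rho>'\<^sup>2\<close> is solved by \<open>\<rho> = \<pi>/4 + ln F\<close> with \<open>F'' = F\<close>, and \<open>F = 1\<close>,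
  \<open>F' = \<surd>(cos 2s)\<close> at \<open>ell s\<close> match the inner solution to first order. Energy (Gronwall)
  estimates show that these explicit functions are the unique solutions defining \<open>\<A>\<close> and
  \<open>\<rho>\<close>. Outside the ball \<open>F\<^sup>2 - F'\<^sup>2 = 2 sin\<^sup>2 s\<close> gives \<open>\<rho>'\<^sup>2 = 1 - 2 sin\<^sup>2 s / F\<^sup>2\<close>, hence
  \<open>K = -\<rho>'\<^sup>2 + (1 - \<rho>'\<^sup>2)(2/F\<^sup>2 - 1) = -1 + 4 sin\<^sup>2 s / F\<^sup>4\<close>.\<close>

section \<open>Gluing derivatives and Gronwall-type uniqueness\<close>

lemma DERIV_if_le:
  fixes g h :: "real \<Rightarrow> real"
  assumes g: "\<And>x. x \<le> a \<Longrightarrow> (g has_real_derivative g' x) (at x)"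
    and h: "\<And>x. a \<le> x \<Longrightarrow> (h has_real_derivative h' x) (at x)"
    and "g a = h a" and "g' a = h' a"
  shows "((\<lambda>x. if x \<le> a then g x else h x) has_real_derivative
            (if x \<le> a then g' x else h' x)) (at x)"
proof -
  have "((\<lambda>x. if x \<in> {..a} then g x else h x) has_derivative
      (if x \<in> {..a} then (*) (g' x) else (*) (h' x))) (at x within ({..a} \<union> {a<..}))"
    using assms(3,4)
    by (intro has_derivative_If_within_closures)
       (auto intro!: has_derivative_at_withinI g[unfolded has_field_derivative_def]
          h[unfolded has_field_derivative_def])
  moreover have "{..a} \<union> {a<..} = (UNIV :: real set)" by auto
  ultimately show ?thesis
    by (simp add: has_field_derivative_def if_distrib[of "(*)"])
qed

lemma Gronwall_zero_iff:
  fixes E E' :: "real \<Rightarrow> real"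
  assumes "a \<le> b" and cont: "continuous_on {a..b} E"
    and der: "\<And>x. a < x \<Longrightarrow> x < b \<Longrightarrow> (E has_real_derivative E' x) (at x)"
    and bound: "\<And>x. a < x \<Longrightarrow> x < b \<Longrightarrow> \<bar>E' x\<bar> \<le> C * E x"
    and nonneg: "E a \<ge> 0" "E b \<ge> 0"
  shows "E a = 0 \<longleftrightarrow> E b = 0"
proof -
  have "E b * exp (- C * b) \<le> E a * exp (- C * a)"
  proof (rule DERIV_nonpos_imp_decreasing_open[OF \<open>a \<le> b\<close>])
    fix x assume x: "a < x" "x < b"
    show "\<exists>y. ((\<lambda>x. E x * exp (- C * x)) has_real_derivative y) (at x) \<and> y \<le> 0"
    proof (intro exI conjI)
      show "((\<lambda>x. E x * exp (- C * x)) has_real_derivative (E' x - C * E x) * exp (- C * x)) (at x)"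
        by (auto intro!: derivative_eq_intros der[OF x] simp: algebra_simps)
      show "(E' x - C * E x) * exp (- C * x) \<le> 0"
        using bound[OF x] by (simp add: mult_le_0_iff abs_le_iff)
    qed
  qed (intro continuous_intros cont)
  moreover have "E a * exp (C * a) \<le> E b * exp (C * b)"
  proof (rule DERIV_nonneg_imp_increasing_open[OF \<open>a \<le> b\<close>])
    fix x assume x: "a < x" "x < b"
    show "\<exists>y. ((\<lambda>x. E x * exp (C * x)) has_real_derivative y) (at x) \<and> y \<ge> 0"
    proof (intro exI conjI)
      show "((\<lambda>x. E x * exp (C * x)) has_real_derivative (E' x + C * E x) * exp (C * x)) (at x)"
        by (auto intro!: derivative_eq_intros der[OF x] simp: algebra_simps)
      show "(E' x + C * E x) * exp (C * x) \<ge> 0"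
        using bound[OF x] by (simp add: abs_le_iff)
    qed
  qed (intro continuous_intros cont)
  ultimately show ?thesis
    using nonneg by (auto simp: mult_le_0_iff zero_le_mult_iff)
qed

lemma Gronwall_zero_everywhere:
  fixes E E' :: "real \<Rightarrow> real"
  assumes cont: "continuous_on UNIV E" and nonneg: "\<And>x. E x \<ge> 0"
    and der: "\<And>x. x \<noteq> r \<Longrightarrow> (E has_real_derivative E' x) (at x)"
    and bound: "\<And>x. x \<noteq> r \<Longrightarrow> \<bar>E' x\<bar> \<le> C * E x"
    and "E x0 = 0"
  shows "E x = 0"
proof -
  have segment: "E u = 0 \<longleftrightarrow> E v = 0" if "r \<notin> {min u v<..<max u v}" for u v
  proof -
    have "E (min u v) = 0 \<longleftrightarrow> E (max u v) = 0"
      using that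
      by (intro Gronwall_zero_iff[where E'=E' and C=C] continuous_on_subset[OF cont]
          der bound nonneg) auto
    then show ?thesis by (cases "u \<le> v") (auto simp: min_def max_def)
  qed
  show ?thesis
  proof (cases "r \<in> {min x0 x<..<max x0 x}")
    case True
    then show ?thesis
      using segment[of x0 r] segment[of r x] \<open>E x0 = 0\<close> by auto
  next
    case False
    then show ?thesis using segment[of x0 x] \<open>E x0 = 0\<close> by auto
  qed
qed

lemma Gronwall_zero_connected:
  fixes E E' :: "real \<Rightarrow> real"
  assumes der: "\<And>x. (E has_real_derivative E' x) (at x)" and nonneg: "\<And>x. E x \<ge> 0"
    and local_bound: "\<And>t0. E t0 = 0 \<Longrightarrow> \<exists>e>0. \<exists>C. \<forall>x \<in> ball t0 e. \<bar>E' x\<bar> \<le> C * E x"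
    and "E x0 = 0"
  shows "E x = 0"
proof -
  define S where "S = {t. E t = 0}"
  have cont: "continuous_on UNIV E"
    using der by (meson DERIV_isCont continuous_at_imp_continuous_on)
  then have "closed S" unfolding S_def by (intro closed_Collect_eq continuous_intros)
  moreover have "open S"
  proof (rule openI)
    fix t0 assume "t0 \<in> S"
    then obtain e C where "e > 0" and bound: "\<And>x. x \<in> ball t0 e \<Longrightarrow> \<bar>E' x\<bar> \<le> C * E x"
      using local_bound unfolding S_def by blast
    have "t \<in> S" if t: "t \<in> ball t0 e" for t
    proof -
      have "\<bar>E' x\<bar> \<le> C * E x" if "min t0 t \<le> x" "x \<le> max t0 t" for x
        using t that by (intro bound) (auto simp: dist_real_def)
      then have "E (min t0 t) = 0 \<longleftrightarrow> E (max t0 t) = 0"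
        by (intro Gronwall_zero_iff[where E=E and E'=E' and C=C] der nonneg
            continuous_on_subset[OF cont]) auto
      then show ?thesis
        using \<open>t0 \<in> S\<close> by (cases "t0 \<le> t") (auto simp: S_def min_def max_def)
    qed
    then show "\<exists>e>0. ball t0 e \<subseteq> S" using \<open>e > 0\<close> by blast
  qed
  moreover have "x0 \<in> S" unfolding S_def using \<open>E x0 = 0\<close> by simp
  ultimately have "S = UNIV" using clopen[of S] by blast
  then show ?thesis unfolding S_def by auto
qed

text \<open>The coefficient \<open>c = \<A>'/\<A>\<close> is only locally Lipschitz on \<open>(0, \<infinity>)\<close>, so the energy
  estimate is made near each point where the two solutions agree.\<close>

lemma geodesic_rhs_diff_bound:
  fixes c1 c2 v1 v2 K M B :: real
  assumes "\<bar>c1 - c2\<bar> \<le> K" and "\<bar>c2\<bar> \<le> M" and "\<bar>v1\<bar> \<le> B" and "\<bar>v2\<bar> \<le> B"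
  shows "\<bar>c1 * (1 - v1\<^sup>2) - c2 * (1 - v2\<^sup>2)\<bar> \<le> K * (1 + B\<^sup>2) + 2 * M * B * \<bar>v1 - v2\<bar>"
proof -
  have "v1\<^sup>2 \<le> B\<^sup>2" using assms(3) by (metis abs_ge_zero power2_abs power_mono)
  then have "\<bar>1 - v1\<^sup>2\<bar> \<le> 1 + B\<^sup>2" by (simp add: abs_le_iff)
  then have "\<bar>(c1 - c2) * (1 - v1\<^sup>2)\<bar> \<le> K * (1 + B\<^sup>2)"
    unfolding abs_mult using assms(1) by (intro mult_mono) auto
  moreover have "\<bar>c2 * (v2 - v1) * (v2 + v1)\<bar> \<le> M * \<bar>v1 - v2\<bar> * (2 * B)"
    unfolding abs_mult using assms(2-4) by (intro mult_mono) (auto simp: abs_minus_commute)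
  moreover have "c1 * (1 - v1\<^sup>2) - c2 * (1 - v2\<^sup>2) = (c1 - c2) * (1 - v1\<^sup>2) + c2 * (v2 - v1) * (v2 + v1)"
    by (simp add: algebra_simps power2_eq_square)
  ultimately show ?thesis
    using abs_triangle_ineq[of "(c1 - c2) * (1 - v1\<^sup>2)" "c2 * (v2 - v1) * (v2 + v1)"]
    by (simp add: mult_ac)
qed

lemma geodesic_energy_deriv_bound:
  fixes c1 c2 u1 u2 v1 v2 L M B :: real
  assumes "L \<ge> 0" and "\<bar>c1 - c2\<bar> \<le> L * \<bar>u1 - u2\<bar>" and "\<bar>c2\<bar> \<le> M"
    and "\<bar>v1\<bar> \<le> B" and "\<bar>v2\<bar> \<le> B"
  shows "\<bar>2 * (u1 - u2) * (v1 - v2) + 2 * (v1 - v2) * (c1 * (1 - v1\<^sup>2) - c2 * (1 - v2\<^sup>2))\<bar>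
    \<le> (1 + L * (1 + B\<^sup>2) + 4 * M * B) * ((u1 - u2)\<^sup>2 + (v1 - v2)\<^sup>2)"
proof -
  define D V X where "D = u1 - u2" and "V = v1 - v2"
    and "X = c1 * (1 - v1\<^sup>2) - c2 * (1 - v2\<^sup>2)"
  define K1 K2 where "K1 = L * (1 + B\<^sup>2)" and "K2 = 2 * M * B"
  have "0 \<le> M" "0 \<le> B" using assms(3,4) by linarith+
  have "\<bar>X\<bar> \<le> K1 * \<bar>D\<bar> + K2 * \<bar>V\<bar>"
    unfolding X_def D_def V_def K1_def K2_def
    using geodesic_rhs_diff_bound[OF assms(2-5)] by (simp add: mult_ac)
  have "\<bar>2 * D * V + 2 * V * X\<bar> \<le> 2 * \<bar>D\<bar> * \<bar>V\<bar> + 2 * \<bar>V\<bar> * \<bar>X\<bar>"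
    using abs_triangle_ineq[of "2 * D * V" "2 * V * X"] by (simp only: abs_mult abs_numeral)
  also have "\<dots> \<le> 2 * \<bar>D\<bar> * \<bar>V\<bar> + 2 * \<bar>V\<bar> * (K1 * \<bar>D\<bar> + K2 * \<bar>V\<bar>)"
    using \<open>\<bar>X\<bar> \<le> _\<close> by (simp add: mult_left_mono)
  also have "\<dots> = (1 + K1) * (2 * \<bar>D\<bar> * \<bar>V\<bar>) + 2 * K2 * V\<^sup>2"
    by (simp add: algebra_simps power2_eq_square)
  also have "\<dots> \<le> (1 + K1) * (D\<^sup>2 + V\<^sup>2) + 2 * K2 * (D\<^sup>2 + V\<^sup>2)"
    using sum_squares_bound[of "\<bar>D\<bar>" "\<bar>V\<bar>"] \<open>L \<ge> 0\<close> \<open>0 \<le> M\<close> \<open>0 \<le> B\<close>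
    by (intro add_mono mult_left_mono) (auto simp: K1_def K2_def)
  also have "\<dots> = (1 + L * (1 + B\<^sup>2) + 4 * M * B) * (D\<^sup>2 + V\<^sup>2)"
    by (simp add: K1_def K2_def algebra_simps)
  finally show ?thesis unfolding D_def V_def X_def .
qed

lemma geodesic_ode_unique:
  fixes c P P' q q' :: "real \<Rightarrow> real"
  assumes dP: "\<And>t. (P has_real_derivative P' t) (at t)"
    and dP': "\<And>t. (P' has_real_derivative c (P t) * (1 - (P' t)\<^sup>2)) (at t)"
    and dq: "\<And>t. (q has_real_derivative q' t) (at t)"
    and dq': "\<And>t. (q' has_real_derivative c (q t) * (1 - (q' t)\<^sup>2)) (at t)"
    and init: "q 0 = P 0" "q' 0 = P' 0"
    and pos: "\<And>t. P t > 0"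
    and lip: "\<And>a. a > 0 \<Longrightarrow> \<exists>L M. L \<ge> 0 \<and>
               (\<forall>x y. x \<ge> a \<longrightarrow> y \<ge> a \<longrightarrow> \<bar>c x - c y\<bar> \<le> L * \<bar>x - y\<bar> \<and> \<bar>c x\<bar> \<le> M)"
  shows "q = P"
proof -
  have cont: "continuous_on UNIV f" if "\<And>t. (f has_real_derivative f' t) (at t)" for f f' :: "real \<Rightarrow> real"
    using that by (meson DERIV_isCont continuous_at_imp_continuous_on)
  define E where "E x = (q x - P x)\<^sup>2 + (q' x - P' x)\<^sup>2" for x
  define E' where "E' x = 2 * (q x - P x) * (q' x - P' x) +
      2 * (q' x - P' x) * (c (q x) * (1 - (q' x)\<^sup>2) - c (P x) * (1 - (P' x)\<^sup>2))" for x
  have dE: "(E has_real_derivative E' x) (at x)" for x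
    unfolding E_def E'_def
    by (auto intro!: derivative_eq_intros dP dP' dq dq' simp: algebra_simps)
  have local_bound: "\<exists>e>0. \<exists>C. \<forall>x \<in> ball t0 e. \<bar>E' x\<bar> \<le> C * E x" if "E t0 = 0" for t0
  proof -
    define a B where "a = P t0 / 2" and "B = \<bar>P' t0\<bar> + 1"
    have "a > 0" using pos[of t0] by (simp add: a_def)
    then obtain L M where "L \<ge> 0" and LM:
      "\<And>x y. x \<ge> a \<Longrightarrow> y \<ge> a \<Longrightarrow> \<bar>c x - c y\<bar> \<le> L * \<bar>x - y\<bar> \<and> \<bar>c x\<bar> \<le> M"
      using lip by blast
    define U where "U = {t. a < q t} \<inter> {t. a < P t} \<inter> {t. \<bar>q' t\<bar> < B} \<inter> {t. \<bar>P' t\<bar> < B}"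
    have "open U" unfolding U_def
      by (intro open_Int open_Collect_less continuous_intros
          cont[OF dP] cont[OF dP'] cont[OF dq] cont[OF dq'])
    moreover have "t0 \<in> U"
      using that pos[of t0] unfolding U_def E_def a_def B_def by (auto simp: sum_power2_eq_zero_iff)
    ultimately obtain e where "e > 0" "ball t0 e \<subseteq> U" by (meson openE)
    moreover have "\<bar>E' x\<bar> \<le> (1 + L * (1 + B\<^sup>2) + 4 * M * B) * E x" if "x \<in> U" for x
      using that LM[of "q x" "P x"] LM[of "P x" "P x"] unfolding E_def E'_def U_def
      by (intro geodesic_energy_deriv_bound \<open>L \<ge> 0\<close>) auto
    ultimately show ?thesis by blast
  qed
  have "E 0 = 0" "E t \<ge> 0" for t unfolding E_def using init by simp_all
  then have "E t = 0" for t
    using Gronwall_zero_connected[OF dE _ local_bound] by blast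
  then show ?thesis unfolding E_def by (auto simp: sum_power2_eq_zero_iff)
qed

section \<open>The warping function for \<open>r = \<pi>/4\<close>\<close>

lemma Kpar_eq: "Kpar r x = (if x > r then -1 else 1)"
  by (simp add: Kpar_def heaviside_def)

lemma is_warp_unique:
  assumes "is_warp r f" and "is_warp r g"
  shows "f = g"
proof -
  obtain f' where f': "continuous_on UNIV f'" "\<And>x. (f has_real_derivative f' x) (at x)"
    "\<And>x. x \<noteq> r \<Longrightarrow> (f' has_real_derivative (- Kpar r x * f x)) (at x)" "f 0 = 0" "f' 0 = 1"
    using assms(1) unfolding is_warp_def by blast
  obtain g' where g': "continuous_on UNIV g'" "\<And>x. (g has_real_derivative g' x) (at x)"
    "\<And>x. x \<noteq> r \<Longrightarrow> (g' has_real_derivative (- Kpar r x * g x)) (at x)" "g 0 = 0" "g' 0 = 1"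
    using assms(2) unfolding is_warp_def by blast
  define E where "E x = (f x - g x)\<^sup>2 + (f' x - g' x)\<^sup>2" for x
  define E' where "E' x = 2 * (f x - g x) * (f' x - g' x) * (1 - Kpar r x)" for x
  have "continuous_on UNIV f" "continuous_on UNIV g"
    using f'(2) g'(2) by (meson DERIV_isCont continuous_at_imp_continuous_on)+
  then have "continuous_on UNIV E"
    unfolding E_def by (intro continuous_intros f'(1) g'(1))
  moreover have "(E has_real_derivative E' x) (at x)" if "x \<noteq> r" for x
    unfolding E_def E'_def
    by (auto intro!: derivative_eq_intros f'(2) g'(2) f'(3)[OF that] g'(3)[OF that]
        simp: algebra_simps)
  moreover have "\<bar>E' x\<bar> \<le> 2 * E x" for x
  proof -
    have "\<bar>E' x\<bar> = (2 * \<bar>f x - g x\<bar> * \<bar>f' x - g' x\<bar>) * \<bar>1 - Kpar r x\<bar>"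
      unfolding E'_def by (simp only: abs_mult abs_numeral)
    also have "\<dots> \<le> E x * 2"
    proof (rule mult_mono)
      show "2 * \<bar>f x - g x\<bar> * \<bar>f' x - g' x\<bar> \<le> E x"
        using sum_squares_bound[of "\<bar>f x - g x\<bar>" "\<bar>f' x - g' x\<bar>"] by (simp add: E_def)
      show "\<bar>1 - Kpar r x\<bar> \<le> 2" by (simp add: Kpar_eq)
    qed (simp_all add: E_def)
    finally show ?thesis by simp
  qed
  moreover have "E 0 = 0" unfolding E_def using f' g' by simp
  moreover have "E x \<ge> 0" for x unfolding E_def by simp
  ultimately have "E x = 0" for x
    by (metis Gronwall_zero_everywhere)
  then show "f = g"
    unfolding E_def by (auto simp: sum_power2_eq_zero_iff)
qed

lemma abs_cot_diff_le:
  assumes "0 < a" and "a \<le> u" "u \<le> pi/2" and "a \<le> v" "v \<le> pi/2"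
  shows "\<bar>cot u - cot v\<bar> \<le> \<bar>u - v\<bar> / (sin a)\<^sup>2"
proof -
  have sa: "sin a > 0" using assms by (intro sin_gt_zero) auto
  have su: "sin a \<le> sin u" and sv: "sin a \<le> sin v"
    using assms by (auto intro: sin_monotone_2pi_le)
  have "cot u - cot v = sin (v - u) / (sin u * sin v)"
    using sa su sv by (simp add: cot_def sin_diff field_simps)
  then have "\<bar>cot u - cot v\<bar> = \<bar>sin (v - u)\<bar> / (sin u * sin v)"
    using sa su sv by (simp add: abs_mult)
  also have "\<dots> \<le> \<bar>u - v\<bar> / (sin a * sin a)"
    using abs_sin_x_le_abs_x[of "v - u"] sa su sv
    by (intro frac_le mult_mono) (auto simp: abs_minus_commute)
  finally show ?thesis by (simp add: power2_eq_square)
qed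

lemma abs_cot_le:
  assumes "0 < a" and "a \<le> u" "u \<le> pi/2"
  shows "\<bar>cot u\<bar> \<le> 1 / sin a"
proof -
  have sa: "sin a > 0" using assms by (intro sin_gt_zero) auto
  have su: "sin a \<le> sin u" using assms by (auto intro: sin_monotone_2pi_le)
  have "0 \<le> cos u" using assms by (intro cos_ge_zero) auto
  then have "\<bar>cot u\<bar> = cos u / sin u" using sa su by (simp add: cot_def)
  also have "\<dots> \<le> 1 / sin u" using sa su by (intro divide_right_mono) auto
  also have "\<dots> \<le> 1 / sin a" using sa su by (intro divide_left_mono) auto
  finally show ?thesis .
qed

definition warp_pi4 :: "real \<Rightarrow> real" where
  "warp_pi4 \<rho> = (if \<rho> \<le> pi/4 then sin \<rho> else sqrt 2 / 2 * exp (\<rho> - pi/4))"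

definition warp_pi4' :: "real \<Rightarrow> real" where
  "warp_pi4' \<rho> = (if \<rho> \<le> pi/4 then cos \<rho> else sqrt 2 / 2 * exp (\<rho> - pi/4))"

lemma has_real_derivative_warp_pi4: "(warp_pi4 has_real_derivative warp_pi4' \<rho>) (at \<rho>)"
  unfolding warp_pi4_def[abs_def] warp_pi4'_def
  by (rule DERIV_if_le) (auto intro!: derivative_eq_intros simp: sin_45 cos_45)

lemma has_real_derivative_warp_pi4':
  assumes "\<rho> \<noteq> pi/4"
  shows "(warp_pi4' has_real_derivative - Kpar (pi/4) \<rho> * warp_pi4 \<rho>) (at \<rho>)"
proof (cases "\<rho> < pi/4")
  case True
  have "(cos has_real_derivative - Kpar (pi/4) \<rho> * warp_pi4 \<rho>) (at \<rho>)"
    using DERIV_cos[of \<rho>] True by (simp add: warp_pi4_def Kpar_eq)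
  then show ?thesis
    by (rule has_field_derivative_transform_within_open[of _ _ _ "{..<pi/4}"])
       (use True in \<open>auto simp: warp_pi4'_def\<close>)
next
  case False
  then have "\<rho> > pi/4" using assms by simp
  then have "((\<lambda>\<rho>. sqrt 2 / 2 * exp (\<rho> - pi/4)) has_real_derivative
      - Kpar (pi/4) \<rho> * warp_pi4 \<rho>) (at \<rho>)"
    by (auto intro!: derivative_eq_intros simp: warp_pi4_def Kpar_eq)
  then show ?thesis
    by (rule has_field_derivative_transform_within_open[of _ _ _ "{pi/4<..}"])
       (use \<open>\<rho> > pi/4\<close> in \<open>auto simp: warp_pi4'_def\<close>)
qed

lemma continuous_on_warp_pi4': "continuous_on UNIV warp_pi4'"
proof -
  have "continuous_on ({..pi/4} \<union> {pi/4..})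
      (\<lambda>\<rho>. if \<rho> \<le> pi/4 then cos \<rho> else sqrt 2 / 2 * exp (\<rho> - pi/4))"
  proof (rule continuous_on_If)
    fix \<rho> :: real assume "\<rho> \<in> {pi/4..}" "\<rho> \<le> pi/4"
    then have "\<rho> = pi/4" by simp
    then show "cos \<rho> = sqrt 2 / 2 * exp (\<rho> - pi/4)" by (simp only: cos_45) simp
  qed (auto intro!: continuous_intros)
  moreover have "{..pi/4} \<union> {pi/4..} = (UNIV :: real set)" by auto
  ultimately show ?thesis unfolding warp_pi4'_def[abs_def] by simp
qed

lemma warp_pi4: "warp (pi/4) = warp_pi4"
proof -
  have "is_warp (pi/4) warp_pi4"
    unfolding is_warp_def
    by (intro exI[of _ warp_pi4'] conjI allI impI continuous_on_warp_pi4'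
        has_real_derivative_warp_pi4 has_real_derivative_warp_pi4')
       (auto simp: warp_pi4_def warp_pi4'_def)
  then show ?thesis
    unfolding warp_def by (auto intro: is_warp_unique)
qed

lemma deriv_warp_pi4: "deriv warp_pi4 = warp_pi4'"
  using has_real_derivative_warp_pi4 by (auto intro: DERIV_imp_deriv)

lemma Kperp_pi4_inside:
  assumes "0 < \<rho>" and "\<rho> \<le> pi/4"
  shows "Kperp (pi/4) \<rho> = 1"
proof -
  have "sin \<rho> \<noteq> 0" using assms by (intro sin_gt_zero[THEN less_imp_neq, symmetric]) auto
  then show ?thesis
    using assms by (simp add: Kperp_def warp_pi4 deriv_warp_pi4 warp_pi4_def warp_pi4'_def cos_squared_eq)
qed

lemma Kperp_pi4_outside:
  assumes "pi/4 < \<rho>"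
  shows "Kperp (pi/4) \<rho> = 2 / (exp (\<rho> - pi/4))\<^sup>2 - 1"
  using assms
  by (simp add: Kperp_def warp_pi4 deriv_warp_pi4 warp_pi4_def warp_pi4'_def power_mult_distrib
      field_simps)

lemma warp_pi4_log_deriv: "0 < \<rho> \<Longrightarrow> warp_pi4' \<rho> / warp_pi4 \<rho> = cot (min \<rho> (pi/4))"
  by (auto simp: warp_pi4_def warp_pi4'_def cot_def min_def sin_45 cos_45)

lemma warp_pi4_log_deriv_Lipschitz:
  assumes "a > 0"
  shows "\<exists>L M. L \<ge> 0 \<and> (\<forall>x y. x \<ge> a \<longrightarrow> y \<ge> a \<longrightarrow>
     \<bar>warp_pi4' x / warp_pi4 x - warp_pi4' y / warp_pi4 y\<bar> \<le> L * \<bar>x - y\<bar> \<and>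
     \<bar>warp_pi4' x / warp_pi4 x\<bar> \<le> M)"
proof (intro exI conjI allI impI)
  define b where "b = min a (pi/4)"
  have b: "0 < b" "b \<le> pi/4" "b \<le> a" using assms by (auto simp: b_def)
  show "0 \<le> 1 / (sin b)\<^sup>2" by simp
  fix x y assume "a \<le> x" and "a \<le> y"
  then have m: "b \<le> min x (pi/4)" "min x (pi/4) \<le> pi/2" "b \<le> min y (pi/4)" "min y (pi/4) \<le> pi/2"
    using b by auto
  have "\<bar>warp_pi4' x / warp_pi4 x - warp_pi4' y / warp_pi4 y\<bar>
      \<le> \<bar>min x (pi/4) - min y (pi/4)\<bar> / (sin b)\<^sup>2"
    using warp_pi4_log_deriv \<open>a \<le> x\<close> \<open>a \<le> y\<close> b abs_cot_diff_le[OF b(1) m] by simp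
  also have "\<dots> \<le> \<bar>x - y\<bar> / (sin b)\<^sup>2"
    by (intro divide_right_mono) (auto simp: min_def)
  finally show "\<bar>warp_pi4' x / warp_pi4 x - warp_pi4' y / warp_pi4 y\<bar> \<le> 1 / (sin b)\<^sup>2 * \<bar>x - y\<bar>"
    by simp
  show "\<bar>warp_pi4' x / warp_pi4 x\<bar> \<le> 1 / sin b"
    using warp_pi4_log_deriv \<open>a \<le> x\<close> b abs_cot_le[OF b(1) m(1,2)] by simp
qed

section \<open>The radial coordinate of the geodesic\<close>

lemma cot_pi4: "cot (pi/4) = 1"
  by (simp add: cot_def sin_45 cos_45)

lemma arccos_sqrt2_div2: "arccos (sqrt 2 / 2) = pi/4"
proof -
  have "arccos (cos (pi/4)) = pi/4" by (rule arccos_cos) auto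
  then show ?thesis unfolding cos_45 .
qed

text \<open>\<open>cos \<rho> = cos s cos t\<close> is the spherical Pythagorean theorem for a great circle at
  distance \<open>s\<close> from the centre.\<close>

definition sphere_radius :: "real \<Rightarrow> real \<Rightarrow> real" where
  "sphere_radius s t = arccos (cos s * cos t)"

definition sphere_radius' :: "real \<Rightarrow> real \<Rightarrow> real" where
  "sphere_radius' s t = cos s * sin t / sin (sphere_radius s t)"

definition Ffun' :: "real \<Rightarrow> real \<Rightarrow> real" where
  "Ffun' t s = sinh (t - ell s) + sqrt (cos (2 * s)) * cosh (t - ell s)"

definition hyp_radius :: "real \<Rightarrow> real \<Rightarrow> real" where
  "hyp_radius s t = pi/4 + ln (Ffun t s)"

definition hyp_radius' :: "real \<Rightarrow> real \<Rightarrow> real" where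
  "hyp_radius' s t = Ffun' t s / Ffun t s"

definition geod_pi4 :: "real \<Rightarrow> real \<Rightarrow> real" where
  "geod_pi4 s t = (if t \<le> - ell s then hyp_radius s (- t)
     else if t \<le> ell s then sphere_radius s t else hyp_radius s t)"

definition geod_pi4' :: "real \<Rightarrow> real \<Rightarrow> real" where
  "geod_pi4' s t = (if t \<le> - ell s then - hyp_radius' s (- t)
     else if t \<le> ell s then sphere_radius' s t else hyp_radius' s t)"

lemma sin_sphere_radius: "sin (sphere_radius s t) = sqrt (1 - (cos s * cos t)\<^sup>2)"
proof -
  have "\<bar>cos s * cos t\<bar> \<le> 1" by (simp add: abs_mult mult_le_one)
  then show ?thesis unfolding sphere_radius_def by (intro sin_arccos) (auto simp: abs_le_iff)
qed

lemma Ffun_squared_minus_Ffun'_squared: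
  assumes "cos (2 * s) \<ge> 0"
  shows "(Ffun t s)\<^sup>2 - (Ffun' t s)\<^sup>2 = 2 * (sin s)\<^sup>2"
proof -
  have "(Ffun t s)\<^sup>2 - (Ffun' t s)\<^sup>2
      = ((cosh (t - ell s))\<^sup>2 - (sinh (t - ell s))\<^sup>2) * (1 - (sqrt (cos (2 * s)))\<^sup>2)"
    unfolding Ffun_def Ffun'_def by (simp add: algebra_simps power2_eq_square)
  also have "\<dots> = 2 * (sin s)\<^sup>2"
    using assms by (simp add: cosh_square_eq cos_double_sin)
  finally show ?thesis .
qed

lemma has_real_derivative_Ffun: "((\<lambda>t. Ffun t s) has_real_derivative Ffun' t s) (at t)"
  unfolding Ffun_def Ffun'_def by (auto intro!: derivative_eq_intros)

lemma has_real_derivative_Ffun': "((\<lambda>t. Ffun' t s) has_real_derivative Ffun t s) (at t)"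
  unfolding Ffun_def Ffun'_def by (auto intro!: derivative_eq_intros)

lemma Ffun_ge_1:
  assumes "0 \<le> cos (2 * s)" and "ell s \<le> t"
  shows "1 \<le> Ffun t s"
proof -
  have "0 \<le> sqrt (cos (2 * s)) * sinh (t - ell s)" using assms by simp
  then show ?thesis unfolding Ffun_def using cosh_real_ge_1[of "t - ell s"] by linarith
qed

lemma has_real_derivative_hyp_radius:
  assumes "0 \<le> cos (2 * s)" and "ell s \<le> t"
  shows "(hyp_radius s has_real_derivative hyp_radius' s t) (at t)"
  unfolding hyp_radius_def[abs_def] hyp_radius'_def using Ffun_ge_1[OF assms]
  by (auto intro!: derivative_eq_intros has_real_derivative_Ffun[THEN DERIV_chain2] simp: field_simps)

lemma has_real_derivative_hyp_radius':
  assumes "0 \<le> cos (2 * s)" and "ell s \<le> t"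
  shows "(hyp_radius' s has_real_derivative 1 - (hyp_radius' s t)\<^sup>2) (at t)"
  unfolding hyp_radius'_def[abs_def] using Ffun_ge_1[OF assms]
  by (auto intro!: derivative_eq_intros has_real_derivative_Ffun[THEN DERIV_chain2]
      has_real_derivative_Ffun'[THEN DERIV_chain2] simp: field_simps power2_eq_square)

locale quarter_geodesic =
  fixes s :: real
  assumes s_pos: "0 < s" and s_less: "s < pi/4"
begin

lemma cos_s_gt: "sqrt 2 / 2 < cos s"
  using cos_monotone_0_pi[of s "pi/4"] s_pos s_less by (simp add: cos_45)

lemma cos_s_less_1: "cos s < 1"
  using cos_monotone_0_pi[of 0 s] s_pos s_less by simp

lemma cos_s_pos: "0 < cos s"
proof -
  have "0 < sqrt 2 / 2" by simp
  then show ?thesis using cos_s_gt by linarith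
qed

lemma cos_2s_pos: "0 < cos (2 * s)"
proof -
  have "(sqrt 2 / 2)\<^sup>2 < (cos s)\<^sup>2" using cos_s_gt by (intro power_strict_mono) auto
  then show ?thesis by (simp add: cos_double_cos power_divide)
qed

lemma cos_ell_bounds: "0 < sqrt 2 / 2 / cos s" "sqrt 2 / 2 / cos s < 1"
  using cos_s_pos cos_s_gt by simp_all

lemma cos_ell: "cos (ell s) = sqrt 2 / 2 / cos s"
  unfolding ell_def cos_45 using cos_ell_bounds by (intro cos_arccos) auto

lemma ell_bounds: "0 < ell s" "ell s < pi"
  unfolding ell_def cos_45 using cos_ell_bounds arccos_lt_bounded[of "sqrt 2 / 2 / cos s"]
  by auto

lemma abs_cos_s_cos_less_1: "\<bar>cos s * cos t\<bar> < 1"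
proof -
  have "\<bar>cos s * cos t\<bar> \<le> cos s" using cos_s_pos by (simp add: abs_mult mult_left_le)
  then show ?thesis using cos_s_less_1 by simp
qed

lemma sin_sphere_radius_pos: "0 < sin (sphere_radius s t)"
  using abs_cos_s_cos_less_1[of t] unfolding sin_sphere_radius
  by (simp add: abs_square_less_1)

lemma cos_sphere_radius: "cos (sphere_radius s t) = cos s * cos t"
  unfolding sphere_radius_def using abs_cos_s_cos_less_1[of t] by (simp add: abs_le_iff)

lemma has_real_derivative_sphere_radius:
  "(sphere_radius s has_real_derivative sphere_radius' s t) (at t)"
proof -
  have "- 1 < cos s * cos t" "cos s * cos t < 1" using abs_cos_s_cos_less_1[of t] by auto
  then show ?thesis
    unfolding sphere_radius'_def sin_sphere_radius unfolding sphere_radius_def[abs_def]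
    by (auto intro!: derivative_eq_intros simp: field_simps)
qed

lemma has_real_derivative_sphere_radius':
  "(sphere_radius' s has_real_derivative
      cot (sphere_radius s t) * (1 - (sphere_radius' s t)\<^sup>2)) (at t)"
proof -
  have "sin (sphere_radius s t) \<noteq> 0" using sin_sphere_radius_pos by (metis less_irrefl)
  then show ?thesis
    unfolding sphere_radius'_def[abs_def]
    by (auto intro!: derivative_eq_intros has_real_derivative_sphere_radius[THEN DERIV_chain2]
        simp: cos_sphere_radius cot_def sphere_radius'_def field_simps power2_eq_square)
qed

lemma sphere_radius_pos: "0 < sphere_radius s t"
  unfolding sphere_radius_def using abs_cos_s_cos_less_1[of t] arccos_lt_bounded[of "cos s * cos t"]
  by auto

lemma sphere_radius_le:
  assumes "\<bar>t\<bar> \<le> ell s"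
  shows "sphere_radius s t \<le> pi/4"
proof -
  have "cos (ell s) \<le> cos \<bar>t\<bar>" using assms ell_bounds by (intro cos_monotone_0_pi_le) auto
  then have "sqrt 2 / 2 \<le> cos s * cos t"
    using cos_s_pos by (simp add: cos_ell field_simps)
  moreover have "cos s * cos t \<le> 1" using abs_cos_s_cos_less_1[of t] by simp
  ultimately have "arccos (cos s * cos t) \<le> arccos (sqrt 2 / 2)"
    by (intro arccos_le_arccos) (auto intro: order_trans[of _ 0])
  then show ?thesis unfolding sphere_radius_def arccos_sqrt2_div2 .
qed

lemma sphere_radius_ell: "sphere_radius s (ell s) = pi/4" "sphere_radius s (- ell s) = pi/4"
  using cos_s_pos by (simp_all add: sphere_radius_def cos_ell arccos_sqrt2_div2)

lemma sphere_radius'_ell: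
  "sphere_radius' s (ell s) = sqrt (cos (2 * s))" "sphere_radius' s (- ell s) = - sqrt (cos (2 * s))"
proof -
  have "sin (ell s) > 0" using ell_bounds by (intro sin_gt_zero)
  then have pos: "sphere_radius' s (ell s) \<ge> 0"
    unfolding sphere_radius'_def using cos_s_pos sin_sphere_radius_pos[of "ell s"] by simp
  have c: "cos s * cos (ell s) = sqrt 2 / 2" using cos_s_pos by (simp add: cos_ell)
  have "(sphere_radius' s (ell s))\<^sup>2 = 2 * ((cos s)\<^sup>2 - (cos s * cos (ell s))\<^sup>2)"
    unfolding sphere_radius'_def sphere_radius_ell sin_45
    by (simp add: power_mult_distrib power_divide sin_squared_eq field_simps)
  also have "\<dots> = cos (2 * s)"
    unfolding c by (simp add: cos_double_cos power_divide)
  finally show "sphere_radius' s (ell s) = sqrt (cos (2 * s))"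
    using pos by (simp add: real_sqrt_unique)
  then show "sphere_radius' s (- ell s) = - sqrt (cos (2 * s))"
    by (simp add: sphere_radius'_def sphere_radius_def)
qed

lemma sphere_radius_0: "sphere_radius s 0 = s" "sphere_radius' s 0 = 0"
  using s_pos s_less by (simp_all add: sphere_radius_def sphere_radius'_def arccos_cos)

lemma hyp_radius_ell: "hyp_radius s (ell s) = pi/4" "hyp_radius' s (ell s) = sqrt (cos (2 * s))"
  by (simp_all add: hyp_radius_def hyp_radius'_def Ffun_def Ffun'_def)

lemma Ffun_gt_1: "ell s < t \<Longrightarrow> 1 < Ffun t s"
proof -
  assume "ell s < t"
  then have "0 < sqrt (cos (2 * s)) * sinh (t - ell s)" using cos_2s_pos by simp
  then show ?thesis unfolding Ffun_def using cosh_real_ge_1[of "t - ell s"] by linarith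
qed

lemma hyp_radius_gt: "ell s < t \<Longrightarrow> pi/4 < hyp_radius s t"
  by (simp add: hyp_radius_def Ffun_gt_1 ln_gt_zero)

lemma geod_pi4_inside:
  assumes "\<bar>t\<bar> \<le> ell s"
  shows "geod_pi4 s t = sphere_radius s t" "geod_pi4' s t = sphere_radius' s t"
  using assms ell_bounds sphere_radius_ell sphere_radius'_ell hyp_radius_ell
  by (cases "t = - ell s"; auto simp: geod_pi4_def geod_pi4'_def)+

lemma geod_pi4_outside:
  assumes "ell s < \<bar>t\<bar>"
  shows "geod_pi4 s t = hyp_radius s \<bar>t\<bar>" "(geod_pi4' s t)\<^sup>2 = (hyp_radius' s \<bar>t\<bar>)\<^sup>2"
  using assms ell_bounds by (auto simp: geod_pi4_def geod_pi4'_def)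

lemma has_real_derivative_geod_pi4: "(geod_pi4 s has_real_derivative geod_pi4' s t) (at t)"
proof -
  have inner: "((\<lambda>t. if t \<le> ell s then sphere_radius s t else hyp_radius s t) has_real_derivative
      (if t \<le> ell s then sphere_radius' s t else hyp_radius' s t)) (at t)" for t
    using cos_2s_pos sphere_radius_ell sphere_radius'_ell hyp_radius_ell
    by (intro DERIV_if_le has_real_derivative_sphere_radius has_real_derivative_hyp_radius) auto
  show ?thesis
    unfolding geod_pi4_def[abs_def] geod_pi4'_def
  proof (rule DERIV_if_le[OF _ inner])
    fix x assume "x \<le> - ell s"
    then show "((\<lambda>t. hyp_radius s (- t)) has_real_derivative - hyp_radius' s (- x)) (at x)"
      using DERIV_mirror[where f = "hyp_radius s" and x = x] has_real_derivative_hyp_radius[of s "- x"]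
        cos_2s_pos
      by simp
  qed (use sphere_radius_ell sphere_radius'_ell hyp_radius_ell ell_bounds in auto)
qed

lemma geod_pi4_pos: "0 < geod_pi4 s t"
proof (cases "\<bar>t\<bar> \<le> ell s")
  case True
  then show ?thesis using sphere_radius_pos by (simp add: geod_pi4_inside)
next
  case False
  then have "pi/4 < geod_pi4 s t" using hyp_radius_gt by (simp add: geod_pi4_outside)
  then show ?thesis using pi_gt_zero by linarith
qed

lemma warp_pi4_log_deriv_geod_pi4:
  "warp_pi4' (geod_pi4 s t) / warp_pi4 (geod_pi4 s t) =
     (if \<bar>t\<bar> \<le> ell s then cot (sphere_radius s t) else 1)"
proof (cases "\<bar>t\<bar> \<le> ell s")
  case True
  then show ?thesis
    using sphere_radius_pos sphere_radius_le[OF True]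
    by (simp add: geod_pi4_inside warp_pi4_log_deriv min_def)
next
  case False
  then have "pi/4 < geod_pi4 s t" using hyp_radius_gt by (simp add: geod_pi4_outside)
  then show ?thesis
    using False geod_pi4_pos[of t] by (simp add: warp_pi4_log_deriv min_def cot_pi4)
qed

lemma has_real_derivative_geod_pi4':
  "(geod_pi4' s has_real_derivative
      warp_pi4' (geod_pi4 s t) / warp_pi4 (geod_pi4 s t) * (1 - (geod_pi4' s t)\<^sup>2)) (at t)"
proof -
  have inner: "((\<lambda>t. if t \<le> ell s then sphere_radius' s t else hyp_radius' s t) has_real_derivative
      (if t \<le> ell s then cot (sphere_radius s t) * (1 - (sphere_radius' s t)\<^sup>2)
       else 1 - (hyp_radius' s t)\<^sup>2)) (at t)" for t
    using cos_2s_pos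
    by (intro DERIV_if_le has_real_derivative_sphere_radius' has_real_derivative_hyp_radius')
       (auto simp: sphere_radius_ell sphere_radius'_ell hyp_radius_ell cot_pi4)
  have "(geod_pi4' s has_real_derivative
      (if t \<le> - ell s then 1 - (hyp_radius' s (- t))\<^sup>2
       else if t \<le> ell s then cot (sphere_radius s t) * (1 - (sphere_radius' s t)\<^sup>2)
       else 1 - (hyp_radius' s t)\<^sup>2)) (at t)"
    unfolding geod_pi4'_def[abs_def]
  proof (rule DERIV_if_le[OF _ inner])
    fix x assume "x \<le> - ell s"
    then have "((\<lambda>t. hyp_radius' s (- t)) has_real_derivative - (1 - (hyp_radius' s (- x))\<^sup>2)) (at x)"
      using DERIV_mirror[where f = "hyp_radius' s" and x = x] has_real_derivative_hyp_radius'[of s "- x"]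
        cos_2s_pos
      by simp
    then show "((\<lambda>t. - hyp_radius' s (- t)) has_real_derivative 1 - (hyp_radius' s (- x))\<^sup>2) (at x)"
      using DERIV_minus by fastforce
  qed (use ell_bounds in \<open>auto simp: sphere_radius_ell sphere_radius'_ell hyp_radius_ell cot_pi4\<close>)
  moreover have "(if t \<le> - ell s then 1 - (hyp_radius' s (- t))\<^sup>2
       else if t \<le> ell s then cot (sphere_radius s t) * (1 - (sphere_radius' s t)\<^sup>2)
       else 1 - (hyp_radius' s t)\<^sup>2)
    = warp_pi4' (geod_pi4 s t) / warp_pi4 (geod_pi4 s t) * (1 - (geod_pi4' s t)\<^sup>2)"
    unfolding warp_pi4_log_deriv_geod_pi4
    using ell_bounds geod_pi4_inside[of t] geod_pi4_outside[of t]
    by (cases "t = - ell s")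
       (auto simp: sphere_radius_ell sphere_radius'_ell hyp_radius_ell cot_pi4)
  ultimately show ?thesis by simp
qed

lemma geod_radius_pi4: "geod_radius (pi/4) s = geod_pi4 s"
  unfolding geod_radius_def
proof (rule the_equality)
  have "\<bar>0\<bar> \<le> ell s" using ell_bounds by simp
  then show "is_geod_radius (pi/4) s (geod_pi4 s)"
    unfolding is_geod_radius_def warp_pi4 deriv_warp_pi4
    using has_real_derivative_geod_pi4 has_real_derivative_geod_pi4'
    by (intro exI[of _ "geod_pi4' s"]) (simp add: geod_pi4_inside sphere_radius_0)
next
  fix q assume "is_geod_radius (pi/4) s q"
  then obtain q' where q: "\<And>t. (q has_real_derivative q' t) (at t)"
    "\<And>t. (q' has_real_derivative warp_pi4' (q t) / warp_pi4 (q t) * (1 - (q' t)\<^sup>2)) (at t)"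
    "q 0 = s" "q' 0 = 0"
    unfolding is_geod_radius_def warp_pi4 deriv_warp_pi4 by blast
  have "\<bar>0\<bar> \<le> ell s" using ell_bounds by simp
  then show "q = geod_pi4 s"
    using q(3,4)
    by (intro geodesic_ode_unique[OF has_real_derivative_geod_pi4 has_real_derivative_geod_pi4' q(1,2)]
        geod_pi4_pos warp_pi4_log_deriv_Lipschitz) (simp_all add: geod_pi4_inside sphere_radius_0)
qed

section \<open>Curvature along the geodesic\<close>

lemma Kcurv_pi4:
  "Kcurv s (pi/4) t = (geod_pi4' s t)\<^sup>2 * Kpar (pi/4) (geod_pi4 s t)
     + (1 - (geod_pi4' s t)\<^sup>2) * Kperp (pi/4) (geod_pi4 s t)"
proof -
  have "deriv (geod_pi4 s) t = geod_pi4' s t"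
    using has_real_derivative_geod_pi4 by (rule DERIV_imp_deriv)
  then show ?thesis using s_pos by (simp add: Kcurv_def geod_radius_pi4 Let_def)
qed

lemma Kcurv_pi4_inside:
  assumes "\<bar>t\<bar> < ell s"
  shows "Kcurv s (pi/4) t = 1"
proof -
  have "0 < geod_pi4 s t" "geod_pi4 s t \<le> pi/4"
    using assms sphere_radius_pos[of t] sphere_radius_le[of t] by (simp_all add: geod_pi4_inside)
  then show ?thesis by (simp add: Kcurv_pi4 Kpar_eq Kperp_pi4_inside)
qed

lemma Kcurv_pi4_outside:
  assumes "ell s < \<bar>t\<bar>"
  shows "Kcurv s (pi/4) t = -1 + 4 * (sin s)\<^sup>2 * (Ffun \<bar>t\<bar> s) powi (-4)"
proof -
  define F e where "F = Ffun \<bar>t\<bar> s" and "e = 2 * (sin s)\<^sup>2"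
  have "1 < F" unfolding F_def using assms by (rule Ffun_gt_1)
  have geod: "geod_pi4 s t = pi/4 + ln F"
    using assms unfolding F_def by (simp add: geod_pi4_outside hyp_radius_def)
  have "(Ffun' \<bar>t\<bar> s)\<^sup>2 = F\<^sup>2 - e"
    using Ffun_squared_minus_Ffun'_squared[of s "\<bar>t\<bar>"] cos_2s_pos unfolding F_def e_def by simp
  then have geod': "(geod_pi4' s t)\<^sup>2 = (F\<^sup>2 - e) / F\<^sup>2"
    using assms unfolding F_def by (simp only: geod_pi4_outside hyp_radius'_def power_divide)
  have "Kpar (pi/4) (geod_pi4 s t) = -1"
    using \<open>1 < F\<close> by (simp add: geod Kpar_eq)
  moreover have "Kperp (pi/4) (geod_pi4 s t) = 2 / F\<^sup>2 - 1"
    using \<open>1 < F\<close> Kperp_pi4_outside[of "geod_pi4 s t"] by (simp add: geod)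
  ultimately have "Kcurv s (pi/4) t = (F\<^sup>2 - e) / F\<^sup>2 * (-1) + (1 - (F\<^sup>2 - e) / F\<^sup>2) * (2 / F\<^sup>2 - 1)"
    unfolding Kcurv_pi4 geod' by simp
  also have "\<dots> = -1 + 2 * e / (F\<^sup>2 * F\<^sup>2)"
    using \<open>1 < F\<close> by (simp add: field_simps)
  also have "\<dots> = -1 + 2 * e / F ^ 4"
    by (simp add: power_add[symmetric])
  also have "\<dots> = -1 + 4 * (sin s)\<^sup>2 * F powi (-4)"
    unfolding e_def by (simp only: power_int_minus_divide power_int_numeral) simp
  finally show ?thesis unfolding F_def .
qed
end

text \<open>The hypothesis \<open>n \<ge> 2\<close> only makes \<open>K\<^sub>s\<close> a sectional curvature; the formula itself
  does not depend on the dimension.\<close>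

theorem lemma2p2:
  fixes n :: nat and s :: real
  assumes "n \<ge> 2" and "0 \<le> s" and "s < pi/4"
  shows "(\<forall>t. \<bar>t\<bar> < ell s \<longrightarrow> Kcurv s (pi/4) t = 1) \<and>
         (\<forall>t. \<bar>t\<bar> > ell s \<longrightarrow>
              Kcurv s (pi/4) t = -1 + 4 * (sin s)\<^sup>2 * (Ffun \<bar>t\<bar> s) powi (-4))"
proof (cases "s = 0")
  case True
  then have "ell s = pi/4" by (simp add: ell_def cos_45 arccos_sqrt2_div2)
  with True show ?thesis by (auto simp: Kcurv_def Kpar_eq)
next
  case False
  then interpret quarter_geodesic s using assms by unfold_locales auto
  show ?thesis using Kcurv_pi4_inside Kcurv_pi4_outside by blast
qed

end
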